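(* Let $F\colon\mathsf{Set}\to\mathsf{Set}$ preserve intersections and let $c\colon C\to FC$ be an $F$-coalgebra. Then $\ominus_c=\ominus_{\tau_C\cdot c}$ as operators on the set of subsets of $C$, where the right-hand side is computed for the power-set functor $\mathcal P$ and the canonical graph $\tau_C\cdot c\colon C\to\mathcal P C$.
   Context: On $\mathsf{Set}$ use the factorization system (surjective, injective); subobjects are subsets. $F$ preserves intersections means $F$ preserves injective maps and intersections (wide pullbacks of injective maps). For a functor $H$ preserving intersections and a map $f\colon X\to HY$, $\ominus_f(S)$ for $S\subseteq X$ is the least subset $Z\subseteq Y$ such that $f$ restricted to $S$ factors through $Hm\colon HZ\to HY$, $m$ the inclusion. $\mathcal P$ is the power-set functor. For each set $X$, $\tau_X\colon FX\to\mathcal P X$ is given by $\tau_X(t)=\{x\in X\mid t\notin Fi[F(X\setminus\{x\})]\}$ with $i\colon X\setminus\{x\}\hookrightarrow X$ the inclusion; $\tau_C\cdot c$ is the canonical graph of $(C,c)$. *)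

theory Defs
  imports Main "HOL-Library.FuncSet"
begin

text \<open>A functor on the full subcategory of Set whose objects are the subsets of
  the type 'a, with values in subsets of the type 'b.  Fobj X is the object F X;
  Fmap X Y f is F applied to the map f : X -> Y (given with domain and codomain).\<close>

definition set_functor ::
  "('a set \<Rightarrow> 'b set) \<Rightarrow> ('a set \<Rightarrow> 'a set \<Rightarrow> ('a \<Rightarrow> 'a) \<Rightarrow> 'b \<Rightarrow> 'b) \<Rightarrow> bool" where
  "set_functor Fobj Fmap \<longleftrightarrow>
     (\<forall>X Y f. f \<in> X \<rightarrow> Y \<longrightarrow> Fmap X Y f \<in> Fobj X \<rightarrow> Fobj Y) \<and>
     (\<forall>X Y f g. (\<forall>x\<in>X. f x = g x) \<longrightarrow> (\<forall>t\<in>Fobj X. Fmap X Y f t = Fmap X Y g t)) \<and>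
     (\<forall>X. \<forall>t\<in>Fobj X. Fmap X X (\<lambda>x. x) t = t) \<and>
     (\<forall>X Y Z f g. f \<in> X \<rightarrow> Y \<longrightarrow> g \<in> Y \<rightarrow> Z \<longrightarrow>
        (\<forall>t\<in>Fobj X. Fmap X Z (g \<circ> f) t = Fmap Y Z g (Fmap X Y f t)))"

text \<open>F preserves injective maps and intersections (wide pullbacks of
  inclusions of subsets, for arbitrary families).\<close>

definition preserves_intersections ::
  "('a set \<Rightarrow> 'b set) \<Rightarrow> ('a set \<Rightarrow> 'a set \<Rightarrow> ('a \<Rightarrow> 'a) \<Rightarrow> 'b \<Rightarrow> 'b) \<Rightarrow> bool" where
  "preserves_intersections Fobj Fmap \<longleftrightarrow>
     (\<forall>X Y f. f \<in> X \<rightarrow> Y \<longrightarrow> inj_on f X \<longrightarrow> inj_on (Fmap X Y f) (Fobj X)) \<and>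
     (\<forall>Y \<S> t. (\<forall>S\<in>\<S>. S \<subseteq> Y) \<longrightarrow> t \<in> Fobj Y \<longrightarrow>
        (\<forall>S\<in>\<S>. t \<in> Fmap S Y (\<lambda>x. x) ` Fobj S) \<longrightarrow>
        t \<in> Fmap (Y \<inter> \<Inter>\<S>) Y (\<lambda>x. x) ` Fobj (Y \<inter> \<Inter>\<S>))"

text \<open>The map f restricted to S factors through H m : H Z -> H Y, m the inclusion.\<close>

definition factors_through ::
  "('a set \<Rightarrow> 'b set) \<Rightarrow> ('a set \<Rightarrow> 'a set \<Rightarrow> ('a \<Rightarrow> 'a) \<Rightarrow> 'b \<Rightarrow> 'b) \<Rightarrow> 'a set \<Rightarrow>
    ('x \<Rightarrow> 'b) \<Rightarrow> 'x set \<Rightarrow> 'a set \<Rightarrow> bool" where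
  "factors_through Hobj Hmap Y f S Z \<longleftrightarrow>
     (\<forall>s\<in>S. f s \<in> Hmap Z Y (\<lambda>x. x) ` Hobj Z)"

definition ominus ::
  "('a set \<Rightarrow> 'b set) \<Rightarrow> ('a set \<Rightarrow> 'a set \<Rightarrow> ('a \<Rightarrow> 'a) \<Rightarrow> 'b \<Rightarrow> 'b) \<Rightarrow> 'a set \<Rightarrow>
    ('x \<Rightarrow> 'b) \<Rightarrow> 'x set \<Rightarrow> 'a set" where
  "ominus Hobj Hmap Y f S =
     (THE Z. Z \<subseteq> Y \<and> factors_through Hobj Hmap Y f S Z \<and>
        (\<forall>Z'. Z' \<subseteq> Y \<longrightarrow> factors_through Hobj Hmap Y f S Z' \<longrightarrow> Z \<subseteq> Z'))"

definition Pmap :: "'a set \<Rightarrow> 'a set \<Rightarrow> ('a \<Rightarrow> 'a) \<Rightarrow> 'a set \<Rightarrow> 'a set" where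
  "Pmap X Y f A = f ` A"

definition tau ::
  "('a set \<Rightarrow> 'b set) \<Rightarrow> ('a set \<Rightarrow> 'a set \<Rightarrow> ('a \<Rightarrow> 'a) \<Rightarrow> 'b \<Rightarrow> 'b) \<Rightarrow> 'a set \<Rightarrow> 'b \<Rightarrow> 'a set" where
  "tau Fobj Fmap X t = {x \<in> X. t \<notin> Fmap (X - {x}) X (\<lambda>y. y) ` Fobj (X - {x})}"

end

theory Submission
  imports Defs
begin

(* An element t of F C lies in F Z (for Z \<subseteq> C) iff its support tau_C(t) is
   contained in Z.  If t lies in F Z and x \<notin> Z, then Z \<subseteq> C - {x}, so t lies in
   F(C - {x}) and x \<notin> tau_C(t).  Conversely Z is the intersection of the sets C - {x}
   with x \<in> C - Z, each of which contains t when tau_C(t) \<subseteq> Z, and F preserves this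
   intersection.  Hence f restricted to S factors through F Z exactly when tau_C \<circ> f
   factors through Pow Z, and the least such Z coincide. *)

lemma set_functor_map_funcset:
  assumes "set_functor Fobj Fmap" "f \<in> X \<rightarrow> Y"
  shows "Fmap X Y f \<in> Fobj X \<rightarrow> Fobj Y"
  using assms unfolding set_functor_def by simp

lemma set_functor_map_comp:
  assumes "set_functor Fobj Fmap" "f \<in> X \<rightarrow> Y" "g \<in> Y \<rightarrow> Z" "t \<in> Fobj X"
  shows "Fmap X Z (g \<circ> f) t = Fmap Y Z g (Fmap X Y f t)"
  using assms unfolding set_functor_def by simp

lemma set_functor_inclusion_image_mono:
  assumes F: "set_functor Fobj Fmap"
    and "Z \<subseteq> W" "W \<subseteq> C"
    and t: "t \<in> Fmap Z C (\<lambda>x. x) ` Fobj Z"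
  shows "t \<in> Fmap W C (\<lambda>x. x) ` Fobj W"
proof -
  obtain u where u: "u \<in> Fobj Z" and t_eq: "t = Fmap Z C (\<lambda>x. x) u"
    using t by blast
  have incl_ZW: "(\<lambda>x. x) \<in> Z \<rightarrow> W" and incl_WC: "(\<lambda>x. x) \<in> W \<rightarrow> C"
    using assms(2,3) by auto
  have "t = Fmap W C (\<lambda>x. x) (Fmap Z W (\<lambda>x. x) u)"
    using set_functor_map_comp[OF F incl_ZW incl_WC u] by (simp add: t_eq comp_def)
  moreover have "Fmap Z W (\<lambda>x. x) u \<in> Fobj W"
    using set_functor_map_funcset[OF F incl_ZW] u by blast
  ultimately show ?thesis
    by blast
qed

lemma mem_inclusion_image_iff_tau_subset:
  assumes F: "set_functor Fobj Fmap"
    and P: "preserves_intersections Fobj Fmap"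
    and t: "t \<in> Fobj C" and Z: "Z \<subseteq> C"
  shows "t \<in> Fmap Z C (\<lambda>x. x) ` Fobj Z \<longleftrightarrow> tau Fobj Fmap C t \<subseteq> Z"
proof
  assume tZ: "t \<in> Fmap Z C (\<lambda>x. x) ` Fobj Z"
  show "tau Fobj Fmap C t \<subseteq> Z"
  proof
    fix x
    assume x: "x \<in> tau Fobj Fmap C t"
    show "x \<in> Z"
    proof (rule ccontr)
      assume "x \<notin> Z"
      then have "Z \<subseteq> C - {x}"
        using Z by blast
      then have "t \<in> Fmap (C - {x}) C (\<lambda>y. y) ` Fobj (C - {x})"
        using set_functor_inclusion_image_mono[OF F _ _ tZ] by blast
      with x show False
        unfolding tau_def by blast
    qed
  qed
next
  assume tau_sub: "tau Fobj Fmap C t \<subseteq> Z"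
  define \<S> where "\<S> = (\<lambda>x. C - {x}) ` (C - Z)"
  have "\<forall>S\<in>\<S>. t \<in> Fmap S C (\<lambda>x. x) ` Fobj S"
    using tau_sub unfolding \<S>_def tau_def by auto
  moreover have "\<forall>S\<in>\<S>. S \<subseteq> C"
    unfolding \<S>_def by auto
  ultimately have "t \<in> Fmap (C \<inter> \<Inter>\<S>) C (\<lambda>x. x) ` Fobj (C \<inter> \<Inter>\<S>)"
    using P t unfolding preserves_intersections_def by blast
  moreover have "C \<inter> \<Inter>\<S> = Z"
    using Z unfolding \<S>_def by auto
  ultimately show "t \<in> Fmap Z C (\<lambda>x. x) ` Fobj Z"
    by simp
qed

lemma factors_through_iff_tau_subset:
  assumes "set_functor Fobj Fmap" "preserves_intersections Fobj Fmap"
    and "f \<in> S \<rightarrow> Fobj C" "Z \<subseteq> C"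
  shows "factors_through Fobj Fmap C f S Z \<longleftrightarrow> (\<forall>s\<in>S. tau Fobj Fmap C (f s) \<subseteq> Z)"
  using mem_inclusion_image_iff_tau_subset[OF assms(1,2) _ assms(4)] assms(3)
  unfolding factors_through_def by blast

lemma factors_through_Pow_iff:
  "factors_through Pow Pmap Y g S Z \<longleftrightarrow> (\<forall>s\<in>S. g s \<subseteq> Z)"
  unfolding factors_through_def Pmap_def by simp

lemma ominus_cong:
  assumes "\<And>Z. Z \<subseteq> Y \<Longrightarrow>
      factors_through Hobj Hmap Y f S Z \<longleftrightarrow> factors_through Hobj' Hmap' Y f' S' Z"
  shows "ominus Hobj Hmap Y f S = ominus Hobj' Hmap' Y f' S'"
proof -
  have "(\<lambda>Z. Z \<subseteq> Y \<and> factors_through Hobj Hmap Y f S Z \<and>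
        (\<forall>Z'. Z' \<subseteq> Y \<longrightarrow> factors_through Hobj Hmap Y f S Z' \<longrightarrow> Z \<subseteq> Z'))
      = (\<lambda>Z. Z \<subseteq> Y \<and> factors_through Hobj' Hmap' Y f' S' Z \<and>
        (\<forall>Z'. Z' \<subseteq> Y \<longrightarrow> factors_through Hobj' Hmap' Y f' S' Z' \<longrightarrow> Z \<subseteq> Z'))"
    using assms by (intro ext) blast
  then show ?thesis
    unfolding ominus_def by simp
qed

theorem proposition5p16:
  fixes Fobj :: "'a set \<Rightarrow> 'b set"
    and Fmap :: "'a set \<Rightarrow> 'a set \<Rightarrow> ('a \<Rightarrow> 'a) \<Rightarrow> 'b \<Rightarrow> 'b"
    and C :: "'a set" and c :: "'a \<Rightarrow> 'b"
  assumes "set_functor Fobj Fmap"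
    and "preserves_intersections Fobj Fmap"
    and "c \<in> C \<rightarrow> Fobj C"
  shows "\<forall>S. S \<subseteq> C \<longrightarrow>
           ominus Fobj Fmap C c S = ominus Pow Pmap C (tau Fobj Fmap C \<circ> c) S"
proof (intro allI impI)
  fix S
  assume "S \<subseteq> C"
  then have c_S: "c \<in> S \<rightarrow> Fobj C"
    using assms(3) by blast
  show "ominus Fobj Fmap C c S = ominus Pow Pmap C (tau Fobj Fmap C \<circ> c) S"
  proof (rule ominus_cong)
    fix Z
    assume "Z \<subseteq> C"
    then show "factors_through Fobj Fmap C c S Z \<longleftrightarrow>
        factors_through Pow Pmap C (tau Fobj Fmap C \<circ> c) S Z"
      by (simp add: factors_through_iff_tau_subset[OF assms(1,2) c_S] factors_through_Pow_iff)
  qed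
qed

end
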